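(* Let $C\in\mathcal{C}_n$ be an $n$-qubit Clifford unitary with $$C Z_i C^\dagger = (-1)^{f_i} P^{\vec a_i,\vec b_i},\qquad C X_i C^\dagger = (-1)^{h_i} P^{\vec c_i,\vec d_i}\qquad(i=1,\dots,n),$$ where $\vec a_i,\vec b_i,\vec c_i,\vec d_i\in\{0,1\}^n$ and $f_i,h_i\in\{0,1\}$. Define $\vec\alpha,\vec\beta\in\{0,1\}^n$ by $\alpha_i=\vec c_i\cdot\vec d_i \bmod 2$ and $\beta_i=\vec a_i\cdot\vec b_i \bmod 2$. Then $$C^* = e^{i\theta}\, C\, P^{\vec\alpha,\vec\beta}$$ for some phase $\theta\in\mathbb{R}$, where $C^*$ denotes entrywise complex conjugation in the computational basis.
   Context: Single-qubit Paulis: $X=\begin{pmatrix}0&1\\1&0\end{pmatrix}$, $Y=\begin{pmatrix}0&-i\\i&0\end{pmatrix}$, $Z=\begin{pmatrix}1&0\\0&-1\end{pmatrix}$; $X_j,Z_j$ act on qubit $j$. Labeling: $P^{00}=I$, $P^{01}=X$, $P^{10}=Z$, $P^{11}=Y$, and $P^{\vec a,\vec b}=P^{a_1b_1}\otimes\cdots\otimes P^{a_nb_n}$ for $\vec a,\vec b\in\{0,1\}^n$. The Pauli group $\mathcal{P}_n$ consists of the $i^kP^{\vec a,\vec b}$, and $\mathcal{C}_n=\{U\in U(2^n): U\mathcal{P}_nU^\dagger\subseteq\mathcal{P}_n\}$. *)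

theory Defs
  imports Complex_Main "Jordan_Normal_Form.Matrix"
begin

text \<open>Single-qubit Paulis, labelled P^{00}=I, P^{01}=X, P^{10}=Z, P^{11}=Y.\<close>
definition pauli1 :: "bool \<Rightarrow> bool \<Rightarrow> complex mat" where
  "pauli1 a b =
     (if \<not> a \<and> \<not> b then mat_of_rows_list 2 [[1, 0], [0, 1]]
      else if \<not> a \<and> b then mat_of_rows_list 2 [[0, 1], [1, 0]]
      else if a \<and> \<not> b then mat_of_rows_list 2 [[1, 0], [0, -1]]
      else mat_of_rows_list 2 [[0, -\<i>], [\<i>, 0]])"

text \<open>Bit of computational-basis index r belonging to qubit j (0-indexed, j < n);
  qubit 0 is the leftmost tensor factor, i.e. the most significant bit.\<close>
definition qbit :: "nat \<Rightarrow> nat \<Rightarrow> nat \<Rightarrow> nat" where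
  "qbit n r j = (r div 2 ^ (n - 1 - j)) mod 2"

text \<open>P^{a,b} = P^{a_1 b_1} (x) ... (x) P^{a_n b_n}, written out entrywise
  (Kronecker product).  Vectors in {0,1}^n are functions nat => bool on indices < n.\<close>
definition pauli :: "nat \<Rightarrow> (nat \<Rightarrow> bool) \<Rightarrow> (nat \<Rightarrow> bool) \<Rightarrow> complex mat" where
  "pauli n a b = mat (2 ^ n) (2 ^ n)
     (\<lambda>(r, s). \<Prod>j<n. pauli1 (a j) (b j) $$ (qbit n r j, qbit n s j))"

definition pauli_group :: "nat \<Rightarrow> complex mat set" where
  "pauli_group n = {\<i> ^ k \<cdot>\<^sub>m pauli n a b | k a b. True}"

definition dagger :: "complex mat \<Rightarrow> complex mat" where
  "dagger A = mat (dim_col A) (dim_row A) (\<lambda>(i, j). cnj (A $$ (j, i)))"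

definition conj_mat :: "complex mat \<Rightarrow> complex mat" where
  "conj_mat A = map_mat cnj A"

definition unitary_mat :: "nat \<Rightarrow> complex mat \<Rightarrow> bool" where
  "unitary_mat N U \<longleftrightarrow> U \<in> carrier_mat N N \<and> U * dagger U = 1\<^sub>m N"

definition clifford :: "nat \<Rightarrow> complex mat \<Rightarrow> bool" where
  "clifford n U \<longleftrightarrow> unitary_mat (2 ^ n) U \<and>
     (\<forall>P \<in> pauli_group n. U * P * dagger U \<in> pauli_group n)"

definition Zq :: "nat \<Rightarrow> nat \<Rightarrow> complex mat" where
  "Zq n i = pauli n (\<lambda>j. j = i) (\<lambda>_. False)"

definition Xq :: "nat \<Rightarrow> nat \<Rightarrow> complex mat" where
  "Xq n i = pauli n (\<lambda>_. False) (\<lambda>j. j = i)"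

definition sgn_bit :: "bool \<Rightarrow> complex" where
  "sgn_bit f = (if f then -1 else 1)"

definition dot2 :: "nat \<Rightarrow> (nat \<Rightarrow> bool) \<Rightarrow> (nat \<Rightarrow> bool) \<Rightarrow> bool" where
  "dot2 n u v = odd (card {j. j < n \<and> u j \<and> v j})"

end

theory Submission
  imports Defs "Jordan_Normal_Form.Determinant"
begin

text \<open>
  Put \<open>D = C\<^sup>*\<close> and \<open>M = C\<^sup>\<dagger> D\<close>. As \<open>Z\<^sub>i\<close> and \<open>X\<^sub>i\<close> are real, \<open>D Z\<^sub>i D\<^sup>\<dagger>\<close> and
  \<open>D X\<^sub>i D\<^sup>\<dagger>\<close> are the complex conjugates of \<open>C Z\<^sub>i C\<^sup>\<dagger>\<close> and \<open>C X\<^sub>i C\<^sup>\<dagger>\<close>, and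
  conjugation multiplies \<open>P\<^bsup>a,b\<^esup>\<close> by \<open>(-1)\<^bsup>a\<cdot>b\<^esup>\<close>, one sign for each factor \<open>Y\<close>.
  Hence \<open>M\<close> commutes with \<open>Z\<^sub>i\<close> up to the sign \<open>(-1)\<^bsup>\<beta>\<^sub>i\<^esup>\<close> and with \<open>X\<^sub>i\<close> up to
  \<open>(-1)\<^bsup>\<alpha>\<^sub>i\<^esup>\<close>. The Pauli operator \<open>P\<^bsup>\<alpha>,\<beta>\<^esup>\<close> obeys the same twisted commutation
  relations and squares to the identity, so \<open>M P\<^bsup>\<alpha>,\<beta>\<^esup>\<close> commutes with all \<open>Z\<^sub>i\<close> and \<open>X\<^sub>i\<close>
  and is a scalar \<open>l\<close>. Unitarity of \<open>M\<close> gives \<open>|l| = 1\<close>, and \<open>C\<^sup>* = C M = l C P\<^bsup>\<alpha>,\<beta>\<^esup>\<close>.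
\<close>

section \<open>Signs, adjoints and complex conjugates of matrices\<close>

lemma sgn_bit_mult_self [simp]: "sgn_bit p * sgn_bit p = 1"
  by (simp add: sgn_bit_def)

lemma prod_of_bool_eq:
  "finite A \<Longrightarrow> (\<Prod>x\<in>A. of_bool (P x) :: 'a :: comm_semiring_1) = of_bool (\<forall>x\<in>A. P x)"
  by (induction A rule: finite_induct) auto

lemma prod_sgn_bit:
  "finite A \<Longrightarrow> (\<Prod>x\<in>A. sgn_bit (P x)) = sgn_bit (odd (card {x\<in>A. P x}))"
proof -
  assume "finite A"
  then have "(\<Prod>x\<in>A. sgn_bit (P x)) = (\<Prod>x\<in>{x\<in>A. P x}. -1)"
    unfolding sgn_bit_def using prod.inter_filter[of A "\<lambda>_. - 1 :: complex" P] by simp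
  then show ?thesis
    by (simp add: sgn_bit_def)
qed

lemma exp_Arg_eq_if_norm_eq_1:
  assumes "cmod z = 1"
  shows "exp (\<i> * complex_of_real (Arg z)) = z"
proof -
  have "z \<noteq> 0"
    using assms by auto
  then have "exp (\<i> * complex_of_real (Arg z)) = sgn z"
    by (simp add: cis_conv_exp [symmetric] cis_Arg)
  then show ?thesis
    using assms by (simp add: sgn_eq)
qed

lemma smult_one_mat [simp]: "(1 :: 'a :: monoid_mult) \<cdot>\<^sub>m A = A"
  by (rule eq_matI) auto

lemma smult_smult_mat: "a \<cdot>\<^sub>m (b \<cdot>\<^sub>m A) = (a * b :: 'a :: semigroup_mult) \<cdot>\<^sub>m A"
  by (rule eq_matI) (auto simp: mult.assoc)

lemma mult_commute_if_twisted_commute: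
  fixes A B Q :: "'a :: comm_ring_1 mat"
  assumes A: "A \<in> carrier_mat N N" and B: "B \<in> carrier_mat N N" and Q: "Q \<in> carrier_mat N N"
    and AQ: "A * Q = t \<cdot>\<^sub>m (Q * A)" and BQ: "B * Q = t \<cdot>\<^sub>m (Q * B)" and "t * t = 1"
  shows "A * B * Q = Q * (A * B)"
proof -
  have "A * B * Q = A * (t \<cdot>\<^sub>m (Q * B))"
    using A B Q BQ by simp
  also have "\<dots> = t \<cdot>\<^sub>m (A * Q * B)"
    using A B Q by (simp add: mult_smult_distrib[OF A mult_carrier_mat[OF Q B]])
  also have "\<dots> = t \<cdot>\<^sub>m (t \<cdot>\<^sub>m (Q * A) * B)"
    by (simp add: AQ)
  also have "\<dots> = (t * t) \<cdot>\<^sub>m (Q * A * B)"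
    using A B Q by (simp add: mult_smult_assoc_mat[OF mult_carrier_mat[OF Q A] B] smult_smult_mat)
  also have "\<dots> = Q * (A * B)"
    using A B Q \<open>t * t = 1\<close> by simp
  finally show ?thesis .
qed

lemma dagger_carrier: "A \<in> carrier_mat nr nc \<Longrightarrow> dagger A \<in> carrier_mat nc nr"
  unfolding dagger_def by auto

lemma dagger_dagger [simp]: "dagger (dagger A) = A"
  by (rule eq_matI) (auto simp: dagger_def)

lemma dagger_mult:
  assumes "A \<in> carrier_mat nr n" "B \<in> carrier_mat n nc"
  shows "dagger (A * B) = dagger B * dagger A"
  by (rule eq_matI) (use assms in \<open>auto simp: dagger_def scalar_prod_def mult.commute\<close>)

lemma dagger_smult: "dagger (k \<cdot>\<^sub>m A) = cnj k \<cdot>\<^sub>m dagger A"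
  by (rule eq_matI) (auto simp: dagger_def)

lemma conj_mat_carrier: "A \<in> carrier_mat nr nc \<Longrightarrow> conj_mat A \<in> carrier_mat nr nc"
  unfolding conj_mat_def by auto

lemma conj_mat_mult:
  assumes "A \<in> carrier_mat nr n" "B \<in> carrier_mat n nc"
  shows "conj_mat (A * B) = conj_mat A * conj_mat B"
  by (rule eq_matI) (use assms in \<open>auto simp: conj_mat_def scalar_prod_def\<close>)

lemma conj_mat_dagger: "conj_mat (dagger A) = dagger (conj_mat A)"
  by (rule eq_matI) (auto simp: conj_mat_def dagger_def)

lemma conj_mat_smult: "conj_mat (k \<cdot>\<^sub>m A) = cnj k \<cdot>\<^sub>m conj_mat A"
  by (rule eq_matI) (auto simp: conj_mat_def)

lemma conj_mat_one [simp]: "conj_mat (1\<^sub>m N) = 1\<^sub>m N"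
  by (rule eq_matI) (auto simp: conj_mat_def)

lemma unitary_mat_carrier: "unitary_mat N U \<Longrightarrow> U \<in> carrier_mat N N"
  by (simp add: unitary_mat_def)

lemma unitary_mat_dagger_mult_self:
  assumes "unitary_mat N U"
  shows "dagger U * U = 1\<^sub>m N"
  using assms mat_mult_left_right_inverse[of U N "dagger U"]
  by (simp add: unitary_mat_def dagger_carrier)

lemma unitary_mat_dagger: "unitary_mat N U \<Longrightarrow> unitary_mat N (dagger U)"
  by (simp add: unitary_mat_def dagger_carrier unitary_mat_dagger_mult_self)

lemma unitary_mat_conj: "unitary_mat N U \<Longrightarrow> unitary_mat N (conj_mat U)"
  unfolding unitary_mat_def
  by (metis conj_mat_carrier conj_mat_dagger conj_mat_mult conj_mat_one dagger_carrier)

lemma unitary_mat_mult: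
  assumes U: "unitary_mat N U" and V: "unitary_mat N V"
  shows "unitary_mat N (U * V)"
proof -
  have U': "U \<in> carrier_mat N N" "dagger U \<in> carrier_mat N N"
    and V': "V \<in> carrier_mat N N" "dagger V \<in> carrier_mat N N"
    using U V by (auto simp: unitary_mat_def dagger_carrier)
  have "U * V * dagger (U * V) = U * (V * dagger V) * dagger U"
    using U' V' by (simp add: dagger_mult[OF U'(1) V'(1)] assoc_mult_mat[of _ N N _ N _ N])
  then show ?thesis
    using U V U' V' by (simp add: unitary_mat_def)
qed

lemma unitary_mat_conj_eq_mult:
  assumes U: "unitary_mat N U"
  shows "conj_mat U = U * (dagger U * conj_mat U)"
proof -
  have U': "U \<in> carrier_mat N N" and D: "conj_mat U \<in> carrier_mat N N"
    using U by (simp_all add: unitary_mat_def conj_mat_carrier)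
  have "conj_mat U = (U * dagger U) * conj_mat U"
    using U by (simp add: unitary_mat_def left_mult_one_mat[OF D])
  also have "\<dots> = U * (dagger U * conj_mat U)"
    by (rule assoc_mult_mat[OF U' dagger_carrier[OF U'] D])
  finally show ?thesis .
qed

lemma dagger_mult_conj_twisted_commute:
  assumes U: "unitary_mat N U" and Q: "Q \<in> carrier_mat N N" "conj_mat Q = Q"
    and real_up_to_sign: "conj_mat (U * Q * dagger U) = t \<cdot>\<^sub>m (U * Q * dagger U)"
  shows "dagger U * conj_mat U * Q = t \<cdot>\<^sub>m (Q * (dagger U * conj_mat U))"
proof -
  define D where "D = conj_mat U"
  have carriers: "U \<in> carrier_mat N N" "dagger U \<in> carrier_mat N N" "D \<in> carrier_mat N N" "dagger D \<in> carrier_mat N N"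
    using U by (auto simp: D_def unitary_mat_def dagger_carrier conj_mat_carrier)
  have "D * Q * dagger D = conj_mat (U * Q * dagger U)"
    using carriers Q by (simp add: D_def conj_mat_mult[of _ N N _ N] conj_mat_dagger)
  then have DQD: "D * Q * dagger D = t \<cdot>\<^sub>m (U * Q * dagger U)"
    using real_up_to_sign by simp
  have "dagger U * D * Q = dagger U * (D * Q * dagger D) * D"
    using carriers Q unitary_mat_dagger_mult_self[OF unitary_mat_conj[OF U]]
    by (simp add: D_def assoc_mult_mat[of _ N N _ N _ N])
  also have "\<dots> = t \<cdot>\<^sub>m ((dagger U * U) * Q * (dagger U * D))"
    using carriers Q
    by (simp add: DQD mult_smult_distrib[of _ N N _ N] mult_smult_assoc_mat[of _ N N _ N] assoc_mult_mat[of _ N N _ N _ N])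
  also have "\<dots> = t \<cdot>\<^sub>m (Q * (dagger U * D))"
    using Q unitary_mat_dagger_mult_self[OF U] by simp
  finally show ?thesis
    unfolding D_def .
qed

section \<open>Qubits of a basis index\<close>

definition qubit :: "nat \<Rightarrow> nat \<Rightarrow> nat \<Rightarrow> bool" where
  "qubit n r j \<longleftrightarrow> bit r (n - 1 - j)"

lemma qbit_eq_of_bool_qubit: "qbit n r j = of_bool (qubit n r j)"
  unfolding qbit_def qubit_def bit_iff_odd by (simp add: odd_iff_mod_2_eq_one)

lemma eq_if_qubits_eq:
  fixes r s :: nat
  assumes "r < 2 ^ n" "s < 2 ^ n" "\<And>j. j < n \<Longrightarrow> qubit n r j = qubit n s j"
  shows "r = s"
proof -
  have "bit r p = bit s p" if "p < n" for p
    using assms(3)[of "n - 1 - p"] that by (simp add: qubit_def)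
  then have "take_bit n r = take_bit n s"
    by (intro bit_eqI) (auto simp: bit_take_bit_iff)
  then show ?thesis
    using assms(1,2) by (simp add: take_bit_nat_eq_self)
qed

lemma exists_index_with_qubits: "\<exists>s::nat. s < 2 ^ n \<and> (\<forall>j<n. qubit n s j = w j)"
proof -
  define s :: nat where "s = horner_sum of_bool 2 (map (\<lambda>p. w (n - 1 - p)) [0..<n])"
  have "s < 2 ^ n"
    unfolding s_def using horner_sum_of_bool_2_less[of "map (\<lambda>p. w (n - 1 - p)) [0..<n]"] by simp
  moreover have "qubit n s j = w j" if "j < n" for j
    using that by (simp add: s_def qubit_def bit_horner_sum_bit_iff)
  ultimately show ?thesis by blast
qed

definition flip_qubit :: "nat \<Rightarrow> nat \<Rightarrow> nat \<Rightarrow> nat" where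
  "flip_qubit n j r = flip_bit (n - 1 - j) r"

lemma qubit_flip_qubit:
  assumes "j < n" "k < n"
  shows "qubit n (flip_qubit n j r) k \<longleftrightarrow> qubit n r k \<noteq> (k = j)"
  using assms by (auto simp: qubit_def flip_qubit_def bit_flip_bit_iff)

lemma flip_qubit_flip_qubit [simp]: "flip_qubit n j (flip_qubit n j r) = r"
  unfolding flip_qubit_def by (rule bit_eqI) (auto simp: bit_flip_bit_iff)

lemma flip_qubit_less_power:
  assumes "j < n" "r < 2 ^ n"
  shows "flip_qubit n j r < 2 ^ n"
proof -
  have "\<not> n \<le> n - 1 - j" using assms(1) by simp
  then have "take_bit n (flip_qubit n j r) = flip_qubit n j r"
    unfolding flip_qubit_def take_bit_flip_bit_eq take_bit_nat_eq_self[OF assms(2)] by simp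
  then show ?thesis
    by (metis take_bit_nat_less_exp)
qed

lemma flip_qubit_less:
  assumes "qubit n r j"
  shows "flip_qubit n j r < r"
proof -
  have "bit r (n - 1 - j)" using assms unfolding qubit_def .
  then have "int (flip_qubit n j r) = int r - 2 ^ (n - 1 - j)"
    by (simp add: flip_qubit_def flip_bit_eq_if of_nat_unset_bit_eq unset_bit_eq bit_of_nat_iff)
  then have "int (flip_qubit n j r) < int r" by simp
  then show ?thesis by simp
qed

section \<open>Entries of Pauli operators\<close>

definition pauli1_entry :: "bool \<Rightarrow> bool \<Rightarrow> bool \<Rightarrow> bool \<Rightarrow> complex" where
  "pauli1_entry a b x y =
     (if y = (x \<noteq> b) then (if a then (if b then (if x then \<i> else -\<i>) else sgn_bit x) else 1) else 0)"

lemma index_pauli1_of_bool: "pauli1 a b $$ (of_bool x, of_bool y) = pauli1_entry a b x y"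
  unfolding pauli1_def pauli1_entry_def sgn_bit_def
  by (cases a; cases b; cases x; cases y; simp add: mat_of_rows_list_def)

lemma pauli1_entry_eq_0_iff: "pauli1_entry a b x y = 0 \<longleftrightarrow> y \<noteq> (x \<noteq> b)"
  unfolding pauli1_entry_def sgn_bit_def by auto

lemma cnj_pauli1_entry: "cnj (pauli1_entry a b x y) = sgn_bit (a \<and> b) * pauli1_entry a b x y"
  unfolding pauli1_entry_def sgn_bit_def by auto

lemma cnj_pauli1_entry_swap: "cnj (pauli1_entry a b y x) = pauli1_entry a b x y"
  unfolding pauli1_entry_def sgn_bit_def by auto

lemma pauli1_entry_flip: "pauli1_entry a b x (\<not> y) = sgn_bit a * pauli1_entry a b (\<not> x) y"
  unfolding pauli1_entry_def sgn_bit_def by auto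

lemma pauli1_entry_mult: "pauli1_entry a b x y * pauli1_entry a b y z = of_bool (z = x \<and> y = (x \<noteq> b))"
  unfolding pauli1_entry_def sgn_bit_def by auto

lemma pauli1_entry_no_X: "pauli1_entry a False x y = (if y = x then sgn_bit (a \<and> x) else 0)"
  unfolding pauli1_entry_def sgn_bit_def by auto

lemma pauli1_entry_no_Z: "pauli1_entry False b x y = of_bool (y = (x \<noteq> b))"
  unfolding pauli1_entry_def by auto

lemma dim_pauli [simp]: "dim_row (pauli n a b) = 2 ^ n" "dim_col (pauli n a b) = 2 ^ n"
  by (simp_all add: pauli_def)

lemma pauli_carrier: "pauli n a b \<in> carrier_mat (2 ^ n) (2 ^ n)"
  by (simp add: carrier_matI)

lemma index_pauli:
  assumes "r < 2 ^ n" "s < 2 ^ n"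
  shows "pauli n a b $$ (r, s) = (\<Prod>j<n. pauli1_entry (a j) (b j) (qubit n r j) (qubit n s j))"
  using assms by (simp add: pauli_def qbit_eq_of_bool_qubit index_pauli1_of_bool)

definition flipped_by :: "nat \<Rightarrow> (nat \<Rightarrow> bool) \<Rightarrow> nat \<Rightarrow> nat \<Rightarrow> bool" where
  "flipped_by n b r s \<longleftrightarrow> (\<forall>j<n. qubit n s j = (qubit n r j \<noteq> b j))"

lemma flipped_by_unique:
  assumes "flipped_by n b r s" "flipped_by n b r s'" "s < 2 ^ n" "s' < 2 ^ n"
  shows "s = s'"
  using assms by (intro eq_if_qubits_eq) (auto simp: flipped_by_def)

lemma exists_flipped_by: "\<exists>s<2 ^ n. flipped_by n b r s"
  using exists_index_with_qubits[of n "\<lambda>j. qubit n r j \<noteq> b j"] by (auto simp: flipped_by_def)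

lemma index_pauli_nonzero_iff:
  assumes "r < 2 ^ n" "s < 2 ^ n"
  shows "pauli n a b $$ (r, s) \<noteq> 0 \<longleftrightarrow> flipped_by n b r s"
  by (auto simp: index_pauli[OF assms] pauli1_entry_eq_0_iff flipped_by_def)

lemma index_pauli_flip_qubit:
  assumes "r < 2 ^ n" "s < 2 ^ n" "i < n"
  shows "pauli n a b $$ (r, flip_qubit n i s) = sgn_bit (a i) * pauli n a b $$ (flip_qubit n i r, s)"
proof -
  let ?E = "\<lambda>r s j. pauli1_entry (a j) (b j) (qubit n r j) (qubit n s j)"
  have rest: "(\<Prod>j\<in>{..<n} - {i}. ?E r (flip_qubit n i s) j) = (\<Prod>j\<in>{..<n} - {i}. ?E r s j)"
    "(\<Prod>j\<in>{..<n} - {i}. ?E (flip_qubit n i r) s j) = (\<Prod>j\<in>{..<n} - {i}. ?E r s j)"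
    by (auto intro!: prod.cong simp: qubit_flip_qubit assms(3))
  have "pauli n a b $$ (r, flip_qubit n i s) = ?E r (flip_qubit n i s) i * (\<Prod>j\<in>{..<n} - {i}. ?E r s j)"
    using assms rest(1) by (simp add: index_pauli flip_qubit_less_power prod.remove[of "{..<n}" i])
  moreover have "pauli n a b $$ (flip_qubit n i r, s) = ?E (flip_qubit n i r) s i * (\<Prod>j\<in>{..<n} - {i}. ?E r s j)"
    using assms rest(2) by (simp add: index_pauli flip_qubit_less_power prod.remove[of "{..<n}" i])
  ultimately show ?thesis
    using assms(3) by (simp add: qubit_flip_qubit pauli1_entry_flip)
qed

lemma conj_mat_pauli: "conj_mat (pauli n a b) = sgn_bit (dot2 n a b) \<cdot>\<^sub>m pauli n a b"
proof (rule eq_matI)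
  fix r s assume "r < dim_row (sgn_bit (dot2 n a b) \<cdot>\<^sub>m pauli n a b)" "s < dim_col (sgn_bit (dot2 n a b) \<cdot>\<^sub>m pauli n a b)"
  then have rs: "r < 2 ^ n" "s < 2 ^ n" by auto
  have "(\<Prod>j<n. sgn_bit (a j \<and> b j)) = sgn_bit (dot2 n a b)"
    by (simp add: prod_sgn_bit dot2_def)
  then show "conj_mat (pauli n a b) $$ (r, s) = (sgn_bit (dot2 n a b) \<cdot>\<^sub>m pauli n a b) $$ (r, s)"
    using rs by (simp add: conj_mat_def index_pauli cnj_pauli1_entry prod.distrib)
qed (auto simp: conj_mat_def)

lemma conj_mat_signed_pauli:
  "conj_mat (sgn_bit f \<cdot>\<^sub>m pauli n a b) = sgn_bit (dot2 n a b) \<cdot>\<^sub>m (sgn_bit f \<cdot>\<^sub>m pauli n a b)"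
  by (simp add: conj_mat_smult conj_mat_pauli smult_smult_mat mult.commute sgn_bit_def)

lemma dagger_pauli: "dagger (pauli n a b) = pauli n a b"
  by (rule eq_matI) (auto simp: dagger_def index_pauli cnj_pauli1_entry_swap)

lemma pauli_mult_self: "pauli n a b * pauli n a b = 1\<^sub>m (2 ^ n)"
proof (rule eq_matI)
  fix r s assume "r < dim_row (1\<^sub>m (2 ^ n) :: complex mat)" "s < dim_col (1\<^sub>m (2 ^ n) :: complex mat)"
  then have rs: "r < 2 ^ n" "s < 2 ^ n" by simp_all
  have summand: "pauli n a b $$ (r, k) * pauli n a b $$ (k, s) = of_bool (s = r \<and> flipped_by n b r k)"
    if "k < 2 ^ n" for k
  proof -
    have "pauli n a b $$ (r, k) * pauli n a b $$ (k, s) =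
        (\<Prod>j<n. of_bool (qubit n s j = qubit n r j \<and> qubit n k j = (qubit n r j \<noteq> b j)))"
      by (simp add: index_pauli rs that prod.distrib[symmetric] pauli1_entry_mult)
    also have "\<dots> = of_bool (s = r \<and> flipped_by n b r k)"
      using eq_if_qubits_eq[OF rs(2,1)] by (auto simp: prod_of_bool_eq flipped_by_def)
    finally show ?thesis .
  qed
  obtain k0 where k0: "k0 < 2 ^ n" "flipped_by n b r k0"
    using exists_flipped_by by blast
  then have row_support: "{0..<2 ^ n} \<inter> {k. flipped_by n b r k} = {k0}"
    using flipped_by_unique by auto
  have "(pauli n a b * pauli n a b) $$ (r, s) = (\<Sum>k\<in>{0..<2 ^ n}. pauli n a b $$ (r, k) * pauli n a b $$ (k, s))"
    using rs by (simp add: scalar_prod_def)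
  also have "\<dots> = (\<Sum>k\<in>{0..<2 ^ n}. of_bool (s = r \<and> flipped_by n b r k))"
    by (rule sum.cong) (simp_all add: summand)
  also have "\<dots> = of_bool (s = r)"
    using row_support by (cases "s = r") simp_all
  finally show "(pauli n a b * pauli n a b) $$ (r, s) = 1\<^sub>m (2 ^ n) $$ (r, s)"
    using rs by auto
qed auto

lemma norm_eq_1_if_unitary_smult_pauli:
  assumes "unitary_mat (2 ^ n) (l \<cdot>\<^sub>m pauli n a b)"
  shows "cmod l = 1"
proof -
  have "(l * cnj l) \<cdot>\<^sub>m 1\<^sub>m (2 ^ n) = l \<cdot>\<^sub>m pauli n a b * dagger (l \<cdot>\<^sub>m pauli n a b)"
    by (simp add: dagger_smult dagger_pauli mult_smult_assoc_mat[OF pauli_carrier smult_carrier_mat[OF pauli_carrier]]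
        mult_smult_distrib[OF pauli_carrier pauli_carrier] pauli_mult_self smult_smult_mat)
  also have "\<dots> = 1\<^sub>m (2 ^ n)"
    using assms by (simp add: unitary_mat_def)
  finally have "((l * cnj l) \<cdot>\<^sub>m 1\<^sub>m (2 ^ n)) $$ (0, 0) = (1\<^sub>m (2 ^ n) :: complex mat) $$ (0, 0)"
    by simp
  then have "complex_of_real (cmod l ^ 2) = 1"
    by (simp only: complex_norm_square index_smult_mat(1) index_one_mat(1) mult_1_right) simp
  then have "cmod l ^ 2 = 1"
    by (simp only: of_real_eq_1_iff)
  then show ?thesis
    using norm_ge_zero[of l] by (simp add: power2_eq_1_iff)
qed

section \<open>Commutation with the single-qubit operators\<close>

lemma dim_Zq [simp]: "dim_row (Zq n i) = 2 ^ n" "dim_col (Zq n i) = 2 ^ n"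
  by (simp_all add: Zq_def)

lemma dim_Xq [simp]: "dim_row (Xq n i) = 2 ^ n" "dim_col (Xq n i) = 2 ^ n"
  by (simp_all add: Xq_def)

lemma Zq_carrier: "Zq n i \<in> carrier_mat (2 ^ n) (2 ^ n)"
  by (simp add: carrier_matI)

lemma Xq_carrier: "Xq n i \<in> carrier_mat (2 ^ n) (2 ^ n)"
  by (simp add: carrier_matI)

lemma index_Zq:
  assumes "r < 2 ^ n" "s < 2 ^ n" "i < n"
  shows "Zq n i $$ (r, s) = (if r = s then sgn_bit (qubit n s i) else 0)"
proof (cases "r = s")
  case True
  have "sgn_bit ((j = i) \<and> qubit n s j) = (if j = i then sgn_bit (qubit n s j) else 1)" for j
    by (simp add: sgn_bit_def)
  then show ?thesis
    using True assms by (simp add: Zq_def index_pauli pauli1_entry_no_X)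
next
  case False
  then have "\<not> flipped_by n (\<lambda>_. False) r s"
    using eq_if_qubits_eq[OF assms(1,2)] by (auto simp: flipped_by_def)
  then show ?thesis
    using False index_pauli_nonzero_iff[OF assms(1,2), of "\<lambda>j. j = i" "\<lambda>_. False"] by (simp add: Zq_def)
qed

lemma index_Xq:
  assumes "r < 2 ^ n" "s < 2 ^ n" "i < n"
  shows "Xq n i $$ (r, s) = of_bool (r = flip_qubit n i s)"
proof -
  have "(\<forall>j\<in>{..<n}. qubit n s j = (qubit n r j \<noteq> (j = i))) \<longleftrightarrow> r = flip_qubit n i s"
    using eq_if_qubits_eq[OF assms(1) flip_qubit_less_power[OF assms(3,2)]] assms(3)
    by (auto simp: qubit_flip_qubit)
  then show ?thesis
    unfolding Xq_def index_pauli[OF assms(1,2)] pauli1_entry_no_Z prod_of_bool_eq[OF finite_lessThan]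
    by simp
qed

lemma conj_mat_Zq: "conj_mat (Zq n i) = Zq n i"
  by (simp add: Zq_def conj_mat_pauli dot2_def sgn_bit_def)

lemma conj_mat_Xq: "conj_mat (Xq n i) = Xq n i"
  by (simp add: Xq_def conj_mat_pauli dot2_def sgn_bit_def)

lemma index_mult_Zq:
  assumes "M \<in> carrier_mat (2 ^ n) (2 ^ n)" "r < 2 ^ n" "s < 2 ^ n" "i < n"
  shows "(M * Zq n i) $$ (r, s) = M $$ (r, s) * sgn_bit (qubit n s i)"
  using assms by (simp add: scalar_prod_def index_Zq if_distrib[of "\<lambda>x. _ * x"] cong: if_cong)

lemma index_Zq_mult:
  assumes "M \<in> carrier_mat (2 ^ n) (2 ^ n)" "r < 2 ^ n" "s < 2 ^ n" "i < n"
  shows "(Zq n i * M) $$ (r, s) = sgn_bit (qubit n r i) * M $$ (r, s)"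
  using assms by (simp add: scalar_prod_def index_Zq if_distrib[of "\<lambda>x. x * _"] cong: if_cong)

lemma index_mult_Xq:
  assumes "M \<in> carrier_mat (2 ^ n) (2 ^ n)" "r < 2 ^ n" "s < 2 ^ n" "i < n"
  shows "(M * Xq n i) $$ (r, s) = M $$ (r, flip_qubit n i s)"
proof -
  have "{0..<2 ^ n} \<inter> {k. k = flip_qubit n i s} = {flip_qubit n i s}"
    using flip_qubit_less_power[OF assms(4,3)] by auto
  then show ?thesis
    using assms by (simp add: scalar_prod_def index_Xq)
qed

lemma index_Xq_mult:
  assumes "M \<in> carrier_mat (2 ^ n) (2 ^ n)" "r < 2 ^ n" "s < 2 ^ n" "i < n"
  shows "(Xq n i * M) $$ (r, s) = M $$ (flip_qubit n i r, s)"
proof -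
  have "r = flip_qubit n i k \<longleftrightarrow> k = flip_qubit n i r" for k
    by auto
  moreover have "{0..<2 ^ n} \<inter> {k. k = flip_qubit n i r} = {flip_qubit n i r}"
    using flip_qubit_less_power[OF assms(4,2)] by auto
  ultimately show ?thesis
    using assms by (simp add: scalar_prod_def index_Xq)
qed

lemma commute_Zq_Xq_imp_scalar:
  assumes M: "M \<in> carrier_mat (2 ^ n) (2 ^ n)"
    and Z: "\<And>i. i < n \<Longrightarrow> M * Zq n i = Zq n i * M"
    and X: "\<And>i. i < n \<Longrightarrow> M * Xq n i = Xq n i * M"
  shows "M = M $$ (0, 0) \<cdot>\<^sub>m 1\<^sub>m (2 ^ n)"
proof -
  have off_diagonal: "M $$ (r, s) = 0" if rs: "r < 2 ^ n" "s < 2 ^ n" "r \<noteq> s" for r s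
  proof -
    obtain j where j: "j < n" "qubit n r j \<noteq> qubit n s j"
      using eq_if_qubits_eq rs by blast
    have "M $$ (r, s) * sgn_bit (qubit n s j) = (M * Zq n j) $$ (r, s)"
      by (rule index_mult_Zq[OF M rs(1,2) j(1), symmetric])
    also have "\<dots> = (Zq n j * M) $$ (r, s)"
      by (simp only: Z[OF j(1)])
    also have "\<dots> = sgn_bit (qubit n r j) * M $$ (r, s)"
      by (rule index_Zq_mult[OF M rs(1,2) j(1)])
    finally have "M $$ (r, s) * sgn_bit (qubit n s j) = sgn_bit (qubit n r j) * M $$ (r, s)" .
    then show ?thesis
      using j(2) by (auto simp: sgn_bit_def)
  qed
  have flip_diagonal: "M $$ (flip_qubit n j r, flip_qubit n j r) = M $$ (r, r)" if "r < 2 ^ n" "j < n" for r j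
  proof -
    have flip_r: "flip_qubit n j r < 2 ^ n"
      using that by (simp add: flip_qubit_less_power)
    have "M $$ (r, r) = (M * Xq n j) $$ (r, flip_qubit n j r)"
      using index_mult_Xq[OF M that(1) flip_r that(2)] by simp
    also have "\<dots> = (Xq n j * M) $$ (r, flip_qubit n j r)"
      by (simp only: X[OF that(2)])
    also have "\<dots> = M $$ (flip_qubit n j r, flip_qubit n j r)"
      using index_Xq_mult[OF M that(1) flip_r that(2)] .
    finally show ?thesis ..
  qed
  have diagonal: "M $$ (r, r) = M $$ (0, 0)" if "r < 2 ^ n" for r
    using that
  proof (induction r rule: less_induct)
    case (less r)
    show ?case
    proof (cases "r = 0")
      case False
      then obtain j where j: "j < n" "qubit n r j"
        using eq_if_qubits_eq[OF less.prems, of 0] by (auto simp: qubit_def)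
      then have "M $$ (r, r) = M $$ (flip_qubit n j r, flip_qubit n j r)"
        using flip_diagonal less.prems by simp
      also have "\<dots> = M $$ (0, 0)"
        using flip_qubit_less[OF j(2)] less.prems by (intro less.IH) auto
      finally show ?thesis .
    qed simp
  qed
  show ?thesis
  proof (rule eq_matI)
    fix r s assume "r < dim_row (M $$ (0, 0) \<cdot>\<^sub>m 1\<^sub>m (2 ^ n))" "s < dim_col (M $$ (0, 0) \<cdot>\<^sub>m 1\<^sub>m (2 ^ n))"
    then show "M $$ (r, s) = (M $$ (0, 0) \<cdot>\<^sub>m 1\<^sub>m (2 ^ n)) $$ (r, s)"
      using off_diagonal[of r s] diagonal[of r] by (cases "r = s") auto
  qed (use M in auto)
qed

lemma pauli_mult_Zq:
  assumes "i < n"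
  shows "pauli n a b * Zq n i = sgn_bit (b i) \<cdot>\<^sub>m (Zq n i * pauli n a b)"
proof (rule eq_matI)
  fix r s assume "r < dim_row (sgn_bit (b i) \<cdot>\<^sub>m (Zq n i * pauli n a b))"
    "s < dim_col (sgn_bit (b i) \<cdot>\<^sub>m (Zq n i * pauli n a b))"
  then have rs: "r < 2 ^ n" "s < 2 ^ n" by simp_all
  have "pauli n a b $$ (r, s) * sgn_bit (qubit n s i) = sgn_bit (b i) * (sgn_bit (qubit n r i) * pauli n a b $$ (r, s))"
  proof (cases "flipped_by n b r s")
    case True
    then have "qubit n s i = (qubit n r i \<noteq> b i)"
      using assms by (simp add: flipped_by_def)
    then show ?thesis
      by (auto simp: sgn_bit_def)
  qed (use index_pauli_nonzero_iff[OF rs] in auto)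
  then show "(pauli n a b * Zq n i) $$ (r, s) = (sgn_bit (b i) \<cdot>\<^sub>m (Zq n i * pauli n a b)) $$ (r, s)"
    using rs assms index_mult_Zq[OF pauli_carrier rs assms] index_Zq_mult[OF pauli_carrier rs assms] by simp
qed auto

lemma pauli_mult_Xq:
  assumes "i < n"
  shows "pauli n a b * Xq n i = sgn_bit (a i) \<cdot>\<^sub>m (Xq n i * pauli n a b)"
proof (rule eq_matI)
  fix r s assume "r < dim_row (sgn_bit (a i) \<cdot>\<^sub>m (Xq n i * pauli n a b))"
    "s < dim_col (sgn_bit (a i) \<cdot>\<^sub>m (Xq n i * pauli n a b))"
  then have rs: "r < 2 ^ n" "s < 2 ^ n" by simp_all
  then show "(pauli n a b * Xq n i) $$ (r, s) = (sgn_bit (a i) \<cdot>\<^sub>m (Xq n i * pauli n a b)) $$ (r, s)"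
    using index_mult_Xq[OF pauli_carrier rs assms] index_Xq_mult[OF pauli_carrier rs assms]
      index_pauli_flip_qubit[OF rs assms] by simp
qed auto

lemma twisted_commute_imp_smult_pauli:
  assumes M: "M \<in> carrier_mat (2 ^ n) (2 ^ n)"
    and Z: "\<And>i. i < n \<Longrightarrow> M * Zq n i = sgn_bit (\<beta> i) \<cdot>\<^sub>m (Zq n i * M)"
    and X: "\<And>i. i < n \<Longrightarrow> M * Xq n i = sgn_bit (\<alpha> i) \<cdot>\<^sub>m (Xq n i * M)"
  shows "M = (M * pauli n \<alpha> \<beta>) $$ (0, 0) \<cdot>\<^sub>m pauli n \<alpha> \<beta>"
proof -
  let ?P = "pauli n \<alpha> \<beta>" and ?l = "(M * pauli n \<alpha> \<beta>) $$ (0, 0)"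
  have "M * ?P = ?l \<cdot>\<^sub>m 1\<^sub>m (2 ^ n)"
  proof (rule commute_Zq_Xq_imp_scalar)
    fix i assume "i < n"
    show "M * ?P * Zq n i = Zq n i * (M * ?P)"
      using M Z[OF \<open>i < n\<close>] pauli_mult_Zq[OF \<open>i < n\<close>]
      by (intro mult_commute_if_twisted_commute[where t = "sgn_bit (\<beta> i)"]) (auto simp: pauli_carrier)
    show "M * ?P * Xq n i = Xq n i * (M * ?P)"
      using M X[OF \<open>i < n\<close>] pauli_mult_Xq[OF \<open>i < n\<close>]
      by (intro mult_commute_if_twisted_commute[where t = "sgn_bit (\<alpha> i)"]) (auto simp: pauli_carrier)
  qed (use M pauli_carrier in auto)
  then have "M * ?P * ?P = (?l \<cdot>\<^sub>m 1\<^sub>m (2 ^ n)) * ?P"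
    by simp
  also have "\<dots> = ?l \<cdot>\<^sub>m ?P"
    by (simp add: mult_smult_assoc_mat[OF one_carrier_mat pauli_carrier])
  moreover have "M * ?P * ?P = M"
    using M by (simp add: assoc_mult_mat[OF M pauli_carrier pauli_carrier] pauli_mult_self)
  ultimately show ?thesis
    by simp
qed

theorem lemma3:
  fixes n :: nat and C :: "complex mat"
    and a b c d :: "nat \<Rightarrow> nat \<Rightarrow> bool" and f h :: "nat \<Rightarrow> bool"
  assumes "clifford n C"
    and "\<And>i. i < n \<Longrightarrow> C * Zq n i * dagger C = sgn_bit (f i) \<cdot>\<^sub>m pauli n (a i) (b i)"
    and "\<And>i. i < n \<Longrightarrow> C * Xq n i * dagger C = sgn_bit (h i) \<cdot>\<^sub>m pauli n (c i) (d i)"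
  shows "\<exists>\<theta>::real. conj_mat C =
           exp (\<i> * complex_of_real \<theta>) \<cdot>\<^sub>m (C * pauli n (\<lambda>i. dot2 n (c i) (d i)) (\<lambda>i. dot2 n (a i) (b i)))"
proof -
  let ?P = "pauli n (\<lambda>i. dot2 n (c i) (d i)) (\<lambda>i. dot2 n (a i) (b i))"
  define M where "M = dagger C * conj_mat C"
  have U: "unitary_mat (2 ^ n) C"
    using assms(1) by (simp add: clifford_def)
  have M_unitary: "unitary_mat (2 ^ n) M"
    unfolding M_def using U by (intro unitary_mat_mult unitary_mat_dagger unitary_mat_conj)
  have "M * Zq n i = sgn_bit (dot2 n (a i) (b i)) \<cdot>\<^sub>m (Zq n i * M)" if "i < n" for i
    unfolding M_def
    by (rule dagger_mult_conj_twisted_commute[OF U Zq_carrier conj_mat_Zq])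
      (simp add: assms(2)[OF that] conj_mat_signed_pauli)
  moreover have "M * Xq n i = sgn_bit (dot2 n (c i) (d i)) \<cdot>\<^sub>m (Xq n i * M)" if "i < n" for i
    unfolding M_def
    by (rule dagger_mult_conj_twisted_commute[OF U Xq_carrier conj_mat_Xq])
      (simp add: assms(3)[OF that] conj_mat_signed_pauli)
  ultimately have "M = (M * ?P) $$ (0, 0) \<cdot>\<^sub>m ?P"
    using M_unitary by (intro twisted_commute_imp_smult_pauli unitary_mat_carrier)
  then obtain l where l: "M = l \<cdot>\<^sub>m ?P"
    by blast
  have "conj_mat C = l \<cdot>\<^sub>m (C * ?P)"
    using unitary_mat_conj_eq_mult[OF U] unitary_mat_carrier[OF U]
    by (simp add: M_def [symmetric] l mult_smult_distrib[OF _ pauli_carrier])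
  moreover have "cmod l = 1"
    using M_unitary l norm_eq_1_if_unitary_smult_pauli by metis
  ultimately show ?thesis
    using exp_Arg_eq_if_norm_eq_1 by metis
qed

end
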